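(* Let $\nu\in\mathbb{C}$, $k\in\mathbb{N}$, $\epsilon\in\{\pm1\}$, $E_0=-1/(2\epsilon\nu+2k+1)^2$, and $Y(z)=z^{\epsilon\nu+1/2}e^{-\frac{z}{2\epsilon\nu+2k+1}}\,{}_1F_1\!\left(-k,2\epsilon\nu+1,\frac{2z}{2\epsilon\nu+2k+1}\right)$. If there exists $M\in\mathbb{C}(z,E)$, regular at $E=E_0$, with $M(z,E_0)=-Y'(z)/Y(z)$ and $$H(z,E):=4M^2z^2+4z^2E-4M'z^2-4\nu^2+4z+1=O((E-E_0)^2)\quad(E\to E_0),$$ then $2\epsilon\nu+k\in\mathbb{N}$.
   Context: $'$ denotes $\partial/\partial z$. $H$ is the expression under the square root in the eigenfunction form $\psi=z\left(\frac{M}{\sqrt{-4E}}\mathcal{W}((-4E)^{-1/2},\nu,z\sqrt{-4E})+\mathcal{W}'((-4E)^{-1/2},\nu,z\sqrt{-4E})\right)/\sqrt H$, with $\mathcal W(\mu,\nu,z)$ a solution of $y''+\left(-\frac14+\frac{\mu}{z}+\frac{1/4-\nu^2}{z^2}\right)y=0$. $Y$ solves $4z^2Y''+(4E_0z^2+4z-4\nu^2+1)Y=0$. *)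

theory Defs
  imports "HOL-Analysis.Analysis" "HOL-Computational_Algebra.Polynomial" "HOL-Library.Landau_Symbols"
begin

text \<open>Bivariate complex polynomials in (z, E), represented as polynomials in z whose
  coefficients are polynomials in E; bpoly p z E evaluates p at (z, E).\<close>
definition bpoly :: "complex poly poly \<Rightarrow> complex \<Rightarrow> complex \<Rightarrow> complex" where
  "bpoly p z E = poly (map_poly (\<lambda>c. poly c E) p) z"

text \<open>Terminating confluent hypergeometric function 1F1(-k, b, x) (all terms with j > k vanish).\<close>
definition hyp1F1_neg :: "nat \<Rightarrow> complex \<Rightarrow> complex \<Rightarrow> complex" where
  "hyp1F1_neg k b x =
     (\<Sum>j\<le>k. pochhammer (- of_nat k) j / pochhammer b j * x ^ j / fact j)"

definition E0 :: "complex \<Rightarrow> nat \<Rightarrow> complex \<Rightarrow> complex" where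
  "E0 \<nu> k \<epsilon> = - 1 / (2 * \<epsilon> * \<nu> + 2 * of_nat k + 1) ^ 2"

definition Yfun :: "complex \<Rightarrow> nat \<Rightarrow> complex \<Rightarrow> complex \<Rightarrow> complex" where
  "Yfun \<nu> k \<epsilon> z =
     z powr (\<epsilon> * \<nu> + 1 / 2) * exp (- z / (2 * \<epsilon> * \<nu> + 2 * of_nat k + 1)) *
     hyp1F1_neg k (2 * \<epsilon> * \<nu> + 1) (2 * z / (2 * \<epsilon> * \<nu> + 2 * of_nat k + 1))"

definition Hfun :: "complex \<Rightarrow> (complex \<Rightarrow> complex \<Rightarrow> complex) \<Rightarrow> complex \<Rightarrow> complex \<Rightarrow> complex" where
  "Hfun \<nu> M z E = 4 * (M z E)^2 * z^2 + 4 * z^2 * E - 4 * deriv (\<lambda>w. M w E) z * z^2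
                    - 4 * \<nu>^2 + 4 * z + 1"

end

theory Submission
  imports Defs "HOL-Computational_Algebra.Fundamental_Theorem_Algebra"
begin

text \<open>
  Put s = 2 \<epsilon> \<nu> + 1, c = 2 / (s + 2 k) and L(z) = 1F1(-k; s; c z), so that
  Y = z^(s/2) e^(-c z/2) L and M(z, E0) = -Y'/Y = -(s/(2z) - c/2 + L'/L).
  Vanishing of the E-derivative of H at E0 says that the rational function U = (\<partial>M/\<partial>E)(z, E0)
  satisfies U' = 2 M(z, E0) U + 1, and then V = U L^2 is a rational solution of
  z V' + (s - c z) V = z L^2.
  If 2 \<epsilon> \<nu> + k is not a natural number, s is not a positive integer, which rules out poles of V,
  so V is a polynomial. But the formal Gamma moment functional with weight z^(s-1) e^(-c z)
  annihilates z V' + (s - c z) V (integration by parts), whereas by the orthogonality of the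
  Laguerre polynomial L its value on z L^2 is (s + 2 k)/c times its nonzero value on L^2.
\<close>

section \<open>Formal Gamma moments\<close>

text \<open>On derivatives G = y', kummer_op s c gives z y'' + (s - c z) y', the operator of Kummer's
  equation for 1F1(-k; s; c z).\<close>

definition kummer_op :: "complex \<Rightarrow> complex \<Rightarrow> complex poly \<Rightarrow> complex poly" where
  "kummer_op s c G = [:0, 1:] * pderiv G + [:s, - c:] * G"

lemma coeff_kummer_op:
  "coeff (kummer_op s c G) j =
     (of_nat j + s) * coeff G j - (case j of 0 \<Rightarrow> 0 | Suc i \<Rightarrow> c * coeff G i)"
  by (cases j) (auto simp: kummer_op_def coeff_pderiv algebra_simps)

lemma kummer_op_smult: "kummer_op s c (smult a G) = smult a (kummer_op s c G)"
  by (rule poly_eqI) (simp add: coeff_kummer_op algebra_simps split: nat.split)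

lemma kummer_op_mult:
  "kummer_op s c (u * G) = [:0, 1:] * pderiv u * G + u * kummer_op s c G"
  by (simp add: kummer_op_def pderiv_mult algebra_simps)

lemma kummer_op_monom: "kummer_op s c (monom a e) = monom ((of_nat e + s) * a) e - monom (c * a) (Suc e)"
  by (rule poly_eqI) (auto simp: coeff_kummer_op coeff_monom split: nat.split)

text \<open>For Re s > 0, gamma_moment s c p = c^s / \<Gamma>(s) * (integral of z^(s-1) e^(-c z) p(z) over z > 0);
  the formal version makes sense for every s.\<close>

definition gamma_moment :: "complex \<Rightarrow> complex \<Rightarrow> complex poly \<Rightarrow> complex" where
  "gamma_moment s c p = (\<Sum>j\<le>degree p. coeff p j * pochhammer s j / c ^ j)"

lemma gamma_moment_eq_sum:
  assumes "degree p \<le> n"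
  shows "gamma_moment s c p = (\<Sum>j\<le>n. coeff p j * pochhammer s j / c ^ j)"
  unfolding gamma_moment_def
  by (rule sum.mono_neutral_left) (use assms in \<open>auto simp: coeff_eq_0\<close>)

lemma gamma_moment_0 [simp]: "gamma_moment s c 0 = 0"
  by (simp add: gamma_moment_def)

lemma gamma_moment_1 [simp]: "gamma_moment s c 1 = 1"
  by (simp add: gamma_moment_def)

lemma gamma_moment_add: "gamma_moment s c (p + q) = gamma_moment s c p + gamma_moment s c q"
proof -
  define n where "n = max (degree p) (degree q)"
  have "degree (p + q) \<le> n" "degree p \<le> n" "degree q \<le> n"
    using degree_add_le_max[of p q] by (auto simp: n_def)
  then show ?thesis
    by (simp add: gamma_moment_eq_sum[where n = n] sum.distrib[symmetric] ring_distribs add_divide_distrib)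
qed

lemma gamma_moment_smult: "gamma_moment s c (smult a p) = a * gamma_moment s c p"
  using degree_smult_le[of a p]
  by (simp add: gamma_moment_eq_sum[where n = "degree p"] sum_distrib_left mult_ac)

lemma gamma_moment_minus: "gamma_moment s c (- p) = - gamma_moment s c p"
  using gamma_moment_smult[of s c "- 1" p] by simp

lemma gamma_moment_diff: "gamma_moment s c (p - q) = gamma_moment s c p - gamma_moment s c q"
  using gamma_moment_add[of s c "p - q" q] by simp

lemma gamma_moment_sum: "gamma_moment s c (\<Sum>i\<in>A. f i) = (\<Sum>i\<in>A. gamma_moment s c (f i))"
  by (induction A rule: infinite_finite_induct) (simp_all add: gamma_moment_add)

lemma gamma_moment_pCons_0:
  assumes "c \<noteq> 0"
  shows "gamma_moment s c (pCons 0 p) = s / c * gamma_moment (s + 1) c p"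
proof -
  have "gamma_moment s c (pCons 0 p) = (\<Sum>j\<le>Suc (degree p). coeff (pCons 0 p) j * pochhammer s j / c ^ j)"
    by (rule gamma_moment_eq_sum) (simp add: degree_pCons_le)
  also have "\<dots> = (\<Sum>j\<le>degree p. coeff p j * pochhammer s (Suc j) / c ^ Suc j)"
    by (subst sum.atMost_Suc_shift) simp
  also have "\<dots> = s / c * gamma_moment (s + 1) c p"
    using assms by (simp add: gamma_moment_def sum_distrib_left pochhammer_rec field_simps)
  finally show ?thesis .
qed

text \<open>Integration by parts: z^(s-1) e^(-c z) kummer_op s c G = (z^s e^(-c z) G)'.\<close>

lemma gamma_moment_kummer_op:
  assumes "c \<noteq> 0"
  shows "gamma_moment s c (kummer_op s c G) = 0"
proof -
  define F where "F j = coeff G j * pochhammer s (Suc j) / c ^ j" for j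
  have step: "coeff (kummer_op s c G) (Suc j) * pochhammer s (Suc j) / c ^ Suc j = F (Suc j) - F j" for j
    using assms by (simp add: F_def coeff_kummer_op pochhammer_rec' field_simps)
  have "degree (kummer_op s c G) \<le> Suc (degree G)"
    by (rule degree_le) (auto simp: coeff_kummer_op coeff_eq_0 split: nat.split)
  then have "gamma_moment s c (kummer_op s c G) =
      (\<Sum>j\<le>Suc (degree G). coeff (kummer_op s c G) j * pochhammer s j / c ^ j)"
    by (rule gamma_moment_eq_sum)
  also have "\<dots> = s * coeff G 0 + (\<Sum>j<Suc (degree G). F (Suc j) - F j)"
    by (subst sum.atMost_Suc_shift, simp only: step lessThan_Suc_atMost) (simp add: coeff_kummer_op)
  also have "\<dots> = 0"
    by (simp only: sum_lessThan_telescope) (simp add: F_def coeff_eq_0)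
  finally show ?thesis .
qed

lemma gamma_moment_dirichlet:
  assumes "c \<noteq> 0"
  shows "gamma_moment s c (pCons 0 (pderiv u * pderiv v)) = - gamma_moment s c (u * kummer_op s c (pderiv v))"
  using gamma_moment_kummer_op[OF assms, of s "u * pderiv v"]
  by (simp add: kummer_op_mult gamma_moment_add eq_neg_iff_add_eq_0)

section \<open>Kummer polynomials\<close>

definition kummer_coeff :: "nat \<Rightarrow> complex \<Rightarrow> nat \<Rightarrow> complex" where
  "kummer_coeff k s j = pochhammer (- of_nat k) j / (pochhammer s j * fact j)"

definition kummer_poly :: "nat \<Rightarrow> complex \<Rightarrow> complex \<Rightarrow> complex poly" where
  "kummer_poly k s c = (\<Sum>j\<le>k. monom (kummer_coeff k s j * c ^ j) j)"

lemma kummer_coeff_eq_0: "k < j \<Longrightarrow> kummer_coeff k s j = 0"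
  by (auto simp: kummer_coeff_def pochhammer_eq_0_iff)

lemma kummer_coeff_0 [simp]: "kummer_coeff k s 0 = 1"
  by (simp add: kummer_coeff_def)

lemma coeff_kummer_poly: "coeff (kummer_poly k s c) j = kummer_coeff k s j * c ^ j"
  by (auto simp: kummer_poly_def coeff_sum kummer_coeff_eq_0)

lemma kummer_poly_0 [simp]: "kummer_poly 0 s c = 1"
  by (simp add: kummer_poly_def monom_0)

lemma kummer_poly_nonzero: "kummer_poly k s c \<noteq> 0"
  using coeff_kummer_poly[of k s c 0] by auto

lemma poly_kummer_poly: "poly (kummer_poly k s c) z = hyp1F1_neg k s (c * z)"
  by (simp add: kummer_poly_def hyp1F1_neg_def kummer_coeff_def poly_sum poly_monom
      power_mult_distrib mult_ac)

lemma kummer_coeff_Suc: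
  assumes "n < k \<Longrightarrow> s + of_nat n \<noteq> 0"
  shows "(s + of_nat n) * (of_nat n + 1) * kummer_coeff k s (Suc n) = (of_nat n - of_nat k) * kummer_coeff k s n"
proof (cases "n < k")
  case True
  then have sn: "s + of_nat n \<noteq> 0" using assms by auto
  have n1: "(of_nat n + 1 :: complex) \<noteq> 0"
    by (metis of_nat_Suc of_nat_eq_0_iff nat.distinct(1) add.commute)
  have "kummer_coeff k s (Suc n) = pochhammer (- of_nat k) n * (of_nat n - of_nat k) /
      ((s + of_nat n) * (of_nat n + 1) * (pochhammer s n * fact n))"
    by (simp add: kummer_coeff_def pochhammer_rec' algebra_simps)
  then show ?thesis
    using sn n1 by (simp add: kummer_coeff_def mult_divide_mult_cancel_left_if mult.assoc[symmetric])
next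
  case False
  then show ?thesis
    by (cases "n = k") (auto simp: kummer_coeff_eq_0)
qed

lemma kummer_op_pderiv_kummer_poly:
  assumes "\<forall>j<k. s + of_nat j \<noteq> 0"
  shows "kummer_op s c (pderiv (kummer_poly k s c)) = smult (- c * of_nat k) (kummer_poly k s c)"
proof (rule poly_eqI)
  fix n
  have rec: "(s + of_nat n) * (of_nat n + 1) * kummer_coeff k s (Suc n) = (of_nat n - of_nat k) * kummer_coeff k s n"
    by (rule kummer_coeff_Suc) (use assms in auto)
  show "coeff (kummer_op s c (pderiv (kummer_poly k s c))) n = coeff (smult (- c * of_nat k) (kummer_poly k s c)) n"
  proof (cases n)
    case 0
    with rec show ?thesis by (simp add: coeff_kummer_op coeff_pderiv coeff_kummer_poly algebra_simps)
  next
    case (Suc i)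
    have "coeff (kummer_op s c (pderiv (kummer_poly k s c))) n =
        (s + of_nat n) * (of_nat n + 1) * kummer_coeff k s (Suc n) * c ^ Suc n - c * (of_nat n * kummer_coeff k s n * c ^ n)"
      by (simp add: Suc coeff_kummer_op coeff_pderiv coeff_kummer_poly algebra_simps)
    also have "\<dots> = coeff (smult (- c * of_nat k) (kummer_poly k s c)) n"
      unfolding rec by (simp add: coeff_kummer_poly algebra_simps)
    finally show ?thesis .
  qed
qed

lemma pderiv_kummer_poly:
  "pderiv (kummer_poly (Suc m) s c) = smult (- (of_nat (Suc m) * c / s)) (kummer_poly m (s + 1) c)"
proof (rule poly_eqI)
  fix n
  have "pochhammer (- of_nat (Suc m) :: complex) (Suc n) = - of_nat (Suc m) * pochhammer (- of_nat m) n"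
    by (simp add: pochhammer_rec)
  moreover have "pochhammer s (Suc n) = s * pochhammer (s + 1) n"
    by (rule pochhammer_rec)
  moreover have "(of_nat (Suc n) :: complex) \<noteq> 0"
    by (metis of_nat_eq_0_iff nat.distinct(1))
  ultimately show "coeff (pderiv (kummer_poly (Suc m) s c)) n =
      coeff (smult (- (of_nat (Suc m) * c / s)) (kummer_poly m (s + 1) c)) n"
    by (simp add: coeff_pderiv coeff_kummer_poly kummer_coeff_def fact_Suc
        mult_divide_mult_cancel_left_if mult_ac del: of_nat_Suc)
qed

lemma gamma_moment_kummer_poly_mult:
  assumes "c \<noteq> 0" and "\<forall>j<k. s + of_nat j \<noteq> 0"
  shows "c * of_nat k * gamma_moment s c (kummer_poly k s c * u) =
    - gamma_moment s c (kummer_poly k s c * kummer_op s c (pderiv u))"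
proof -
  let ?L = "kummer_poly k s c"
  have "gamma_moment s c (pCons 0 (pderiv u * pderiv ?L)) = c * of_nat k * gamma_moment s c (?L * u)"
    using gamma_moment_dirichlet[OF assms(1), of s u ?L]
    by (simp add: kummer_op_pderiv_kummer_poly[OF assms(2)] gamma_moment_minus gamma_moment_smult mult.commute)
  moreover have "gamma_moment s c (pCons 0 (pderiv ?L * pderiv u)) =
      - gamma_moment s c (?L * kummer_op s c (pderiv u))"
    by (rule gamma_moment_dirichlet[OF assms(1)])
  ultimately show ?thesis by (simp add: mult.commute)
qed

lemma mult_monom_eq_smult: "p * monom a d = smult a (p * monom (1 :: 'a :: comm_semiring_1) d)"
  by (metis mult_smult_right smult_monom mult.right_neutral)

lemma gamma_moment_kummer_poly_monom:
  assumes "c \<noteq> 0" and "\<forall>j<k. s + of_nat j \<noteq> 0" and "d < k"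
  shows "gamma_moment s c (kummer_poly k s c * monom 1 d) = 0"
  using assms(3)
proof (induction d)
  case 0
  then show ?case
    using gamma_moment_kummer_poly_mult[OF assms(1,2), of 1] assms(1)
    by (simp add: kummer_op_def monom_0)
next
  case (Suc e)
  let ?\<mu> = "\<lambda>d. gamma_moment s c (kummer_poly k s c * monom 1 d)"
  have "kummer_op s c (pderiv (monom 1 (Suc e))) =
      smult (of_nat (Suc e) * (of_nat e + s)) (monom 1 e) - smult (c * of_nat (Suc e)) (monom 1 (Suc e))"
    by (simp add: pderiv_monom kummer_op_monom smult_monom mult_ac del: of_nat_Suc)
  then have "c * of_nat k * ?\<mu> (Suc e) = c * of_nat (Suc e) * ?\<mu> (Suc e)"
    using gamma_moment_kummer_poly_mult[OF assms(1,2), of "monom 1 (Suc e)"] Suc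
    by (simp add: right_diff_distrib gamma_moment_diff gamma_moment_smult del: of_nat_Suc)
  moreover have "of_nat k \<noteq> (of_nat (Suc e) :: complex)"
    using Suc.prems by (simp only: of_nat_eq_iff)
  ultimately show ?case using assms(1) by simp
qed

lemma gamma_moment_kummer_poly_orthogonal:
  assumes "c \<noteq> 0" and "\<forall>j<k. s + of_nat j \<noteq> 0" and "\<forall>j\<ge>k. coeff p j = 0"
  shows "gamma_moment s c (kummer_poly k s c * p) = 0"
proof -
  have "p = (\<Sum>j<k. monom (coeff p j) j)"
    using assms(3) by (intro poly_eqI) (auto simp: coeff_sum coeff_monom not_less)
  then have "kummer_poly k s c * p = (\<Sum>j<k. kummer_poly k s c * monom (coeff p j) j)"
    by (metis sum_distrib_left)
  also have "\<dots> = (\<Sum>j<k. smult (coeff p j) (kummer_poly k s c * monom 1 j))"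
    by (simp only: mult_monom_eq_smult[of _ "coeff p _"])
  finally show ?thesis
    by (simp add: gamma_moment_sum gamma_moment_smult gamma_moment_kummer_poly_monom[OF assms(1,2)])
qed

lemma gamma_moment_z_kummer_poly_sq:
  assumes "c \<noteq> 0" and "\<forall>j<k. s + of_nat j \<noteq> 0"
  shows "c * gamma_moment s c (pCons 0 (kummer_poly k s c ^ 2)) =
    (s + 2 * of_nat k) * gamma_moment s c (kummer_poly k s c ^ 2)"
proof -
  define L where "L = kummer_poly k s c"
  define r where "r = pCons 0 (pderiv L) - smult (of_nat k) L"
  have "coeff r j = (of_nat j - of_nat k) * coeff L j" for j
    by (cases j) (simp_all add: r_def coeff_pderiv algebra_simps)
  then have "\<forall>j\<ge>k. coeff r j = 0"
    by (auto simp: L_def coeff_kummer_poly kummer_coeff_eq_0 le_less)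
  then have "gamma_moment s c (L * r) = 0"
    unfolding L_def by (rule gamma_moment_kummer_poly_orthogonal[OF assms])
  then have zL': "gamma_moment s c (L * pCons 0 (pderiv L)) = of_nat k * gamma_moment s c (L ^ 2)"
    by (simp add: r_def right_diff_distrib gamma_moment_diff gamma_moment_smult power2_eq_square)
  have "kummer_op s c (L ^ 2) =
      L * pCons 0 (pderiv L) + L * pCons 0 (pderiv L) + smult s (L ^ 2) - smult c (pCons 0 (L ^ 2))"
    by (simp add: kummer_op_def pderiv_mult power2_eq_square algebra_simps)
  then have "gamma_moment s c (kummer_op s c (L ^ 2)) = 2 * gamma_moment s c (L * pCons 0 (pderiv L))
      + s * gamma_moment s c (L ^ 2) - c * gamma_moment s c (pCons 0 (L ^ 2))"
    by (simp only: gamma_moment_add gamma_moment_diff gamma_moment_smult mult_2)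
  then have "0 = 2 * gamma_moment s c (L * pCons 0 (pderiv L)) + s * gamma_moment s c (L ^ 2)
      - c * gamma_moment s c (pCons 0 (L ^ 2))"
    by (simp add: gamma_moment_kummer_op[OF assms(1)])
  then show ?thesis
    unfolding L_def[symmetric] zL' by (simp add: algebra_simps)
qed

lemma gamma_moment_kummer_poly_sq_nonzero:
  assumes "c \<noteq> 0" and "\<forall>j<k. s + of_nat j \<noteq> 0"
  shows "gamma_moment s c (kummer_poly k s c ^ 2) \<noteq> 0"
  using assms(2)
proof (induction k arbitrary: s)
  case 0
  then show ?case by simp
next
  case (Suc m)
  define L where "L = kummer_poly (Suc m) s c"
  define \<alpha> where "\<alpha> = - (of_nat (Suc m) * c / s)"
  have "s \<noteq> 0"
    using Suc.prems by force
  then have "\<alpha> \<noteq> 0"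
    using assms(1) by (simp add: \<alpha>_def del: of_nat_Suc)
  have "gamma_moment (s + 1) c (kummer_poly m (s + 1) c ^ 2) \<noteq> 0"
    by (rule Suc.IH) (use Suc.prems in \<open>auto simp: add.assoc\<close>)
  then have "gamma_moment s c (pCons 0 (pderiv L * pderiv L)) \<noteq> 0"
    using \<open>s \<noteq> 0\<close> \<open>\<alpha> \<noteq> 0\<close> assms(1)
    by (simp add: L_def pderiv_kummer_poly gamma_moment_pCons_0 gamma_moment_smult power2_eq_square
        flip: \<alpha>_def del: of_nat_Suc)
  moreover have "gamma_moment s c (pCons 0 (pderiv L * pderiv L)) = c * of_nat (Suc m) * gamma_moment s c (L ^ 2)"
    using gamma_moment_dirichlet[OF assms(1), of s L L]
    by (simp add: L_def kummer_op_pderiv_kummer_poly[OF Suc.prems] gamma_moment_minus gamma_moment_smult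
        power2_eq_square del: of_nat_Suc)
  ultimately show ?case
    by (auto simp: L_def)
qed

section \<open>Rational solutions of Kummer's operator\<close>

text \<open>D^2 times kummer_op applied to the rational function N / D.\<close>

definition kummer_op_frac :: "complex \<Rightarrow> complex \<Rightarrow> complex poly \<Rightarrow> complex poly \<Rightarrow> complex poly" where
  "kummer_op_frac s c N D = D * kummer_op s c N - [:0, 1:] * N * pderiv D"

lemma kummer_op_frac_mult_cancel:
  "kummer_op_frac s c (x * N) (x * D) = x ^ 2 * kummer_op_frac s c N D"
  unfolding kummer_op_frac_def kummer_op_mult pderiv_mult by (simp add: power2_eq_square algebra_simps)

lemma kummer_op_frac_const: "kummer_op_frac s c N [:d:] = smult d (kummer_op s c N)"
  by (simp add: kummer_op_frac_def pderiv_pCons)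

text \<open>A pole z0 of N / D of order r + 1 cannot be cancelled: for z0 \<noteq> 0 the term z (N/D)' has a pole
  of order r + 2, and for z0 = 0 the coefficient of the pole of order r + 1 gets multiplied by
  s - (r + 1).\<close>

lemma kummer_op_frac_root_imp_root:
  assumes eq: "kummer_op_frac s c N D = H * D ^ 2" and "D \<noteq> 0" and "poly D z0 = 0"
    and s: "\<forall>n. s \<noteq> of_nat (Suc n)"
  shows "poly N z0 = 0"
proof (rule ccontr)
  assume N_z0: "poly N z0 \<noteq> 0"
  define x where "x = [:- z0, 1:]"
  obtain D1 where D1: "D = x ^ order z0 D * D1" "\<not> x dvd D1"
    using order_decomp[OF \<open>D \<noteq> 0\<close>, of z0] unfolding x_def by blast
  have "order z0 D \<noteq> 0"
    using order_root \<open>poly D z0 = 0\<close> \<open>D \<noteq> 0\<close> by blast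
  then obtain r where "order z0 D = Suc r"
    using not0_implies_Suc by blast
  with D1 have D_eq: "D = x ^ Suc r * D1"
    by simp
  have D1_z0: "poly D1 z0 \<noteq> 0"
    using D1(2) by (simp add: x_def poly_eq_0_iff_dvd)
  define W where
    "W = x * D1 * kummer_op s c N - [:0, 1:] * N * (smult (of_nat (Suc r)) D1 + x * pderiv D1)"
  have "pderiv x = 1"
    by (simp add: x_def pderiv_pCons)
  then have dD: "pderiv D = x ^ r * (smult (of_nat (Suc r)) D1 + x * pderiv D1)"
    unfolding D_eq pderiv_mult pderiv_power_Suc by (simp add: algebra_simps)
  have "x ^ r * W = kummer_op_frac s c N D"
    unfolding kummer_op_frac_def dD by (simp add: W_def D_eq algebra_simps)
  also have "\<dots> = x ^ r * (H * x ^ Suc (Suc r) * D1 ^ 2)"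
    unfolding eq unfolding D_eq by (simp add: power_mult_distrib power2_eq_square algebra_simps flip: power_add)
  finally have "x ^ r * W = x ^ r * (H * x ^ Suc (Suc r) * D1 ^ 2)" .
  moreover have "x \<noteq> 0"
    by (simp add: x_def)
  ultimately have W_eq: "W = H * x ^ Suc (Suc r) * D1 ^ 2"
    by simp
  show False
  proof (cases "z0 = 0")
    case False
    have "poly W z0 = - (z0 * of_nat (Suc r) * poly N z0 * poly D1 z0)"
      by (simp add: W_def x_def algebra_simps)
    then show False
      using W_eq False N_z0 D1_z0 by (simp add: x_def del: of_nat_Suc)
  next
    case True
    then have x: "x = [:0, 1:]"
      by (simp add: x_def)
    define W2 where "W2 = D1 * kummer_op s c N - N * (smult (of_nat (Suc r)) D1 + x * pderiv D1)"
    have "x * W2 = W"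
      by (simp add: W_def W2_def x algebra_simps)
    also have "\<dots> = x * (H * x ^ Suc r * D1 ^ 2)"
      by (simp add: W_eq algebra_simps)
    finally have "W2 = H * x ^ Suc r * D1 ^ 2"
      using \<open>x \<noteq> 0\<close> by simp
    moreover have "poly W2 0 = (s - of_nat (Suc r)) * poly N 0 * poly D1 0"
      by (simp add: W2_def kummer_op_def x algebra_simps)
    ultimately show False
      using s N_z0 D1_z0 True by (simp add: x del: of_nat_Suc)
  qed
qed

lemma kummer_op_frac_imp_polynomial_solution:
  assumes "D \<noteq> 0" and "kummer_op_frac s c N D = H * D ^ 2" and "\<forall>n. s \<noteq> of_nat (Suc n)"
  shows "\<exists>G. kummer_op s c G = H"
  using assms(1,2)
proof (induction "degree D" arbitrary: N D rule: less_induct)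
  case less
  show ?case
  proof (cases "degree D = 0")
    case True
    then obtain d where d: "D = [:d:]" and "d \<noteq> 0"
      using less.prems by (metis degree_eq_zeroE pCons_eq_0_iff)
    then have "smult d (kummer_op s c N) = smult (d * d) H"
      using less.prems by (simp add: kummer_op_frac_const power2_eq_square mult.commute)
    then have "kummer_op s c (smult (1 / d) N) = H"
      using \<open>d \<noteq> 0\<close> by (simp add: kummer_op_smult smult_eq_iff)
    then show ?thesis by blast
  next
    case False
    then obtain z0 where "poly D z0 = 0"
      using fundamental_theorem_of_algebra constant_degree by metis
    moreover have "poly N z0 = 0"
      by (rule kummer_op_frac_root_imp_root[OF less.prems(2,1) \<open>poly D z0 = 0\<close> assms(3)])
    define x where "x = [:- z0, 1:]"
    have "x \<noteq> 0"
      by (simp add: x_def)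
    obtain N1 D1 where N1: "N = x * N1" and D1: "D = x * D1"
      using \<open>poly D z0 = 0\<close> \<open>poly N z0 = 0\<close> unfolding x_def by (meson poly_eq_0_iff_dvd dvdE)
    have "D1 \<noteq> 0"
      using less.prems D1 by auto
    then have "degree D1 < degree D"
      unfolding D1 by (subst degree_mult_eq) (auto simp: \<open>x \<noteq> 0\<close> x_def)
    moreover have "x ^ 2 * kummer_op_frac s c N1 D1 = x ^ 2 * (H * D1 ^ 2)"
      using less.prems(2) unfolding N1 D1 kummer_op_frac_mult_cancel by (simp add: power_mult_distrib)
    then have "kummer_op_frac s c N1 D1 = H * D1 ^ 2"
      using \<open>x \<noteq> 0\<close> by simp
    ultimately show ?thesis
      using less.hyps \<open>D1 \<noteq> 0\<close> by blast
  qed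
qed

lemma kummer_op_frac_ne_z_kummer_poly_sq:
  assumes "c \<noteq> 0" and s: "s + of_nat k - 1 \<notin> \<nat>" and "s + 2 * of_nat k \<noteq> 0" and "D \<noteq> 0"
  shows "kummer_op_frac s c N D \<noteq> [:0, 1:] * kummer_poly k s c ^ 2 * D ^ 2"
proof
  assume eq: "kummer_op_frac s c N D = [:0, 1:] * kummer_poly k s c ^ 2 * D ^ 2"
  have "s \<noteq> of_nat (Suc n)" for n
  proof
    assume "s = of_nat (Suc n)"
    then have "s + of_nat k - 1 = of_nat (n + k)"
      by simp
    with s show False by simp
  qed
  then obtain G where "kummer_op s c G = [:0, 1:] * kummer_poly k s c ^ 2"
    using kummer_op_frac_imp_polynomial_solution[OF \<open>D \<noteq> 0\<close> eq] by blast
  then have "gamma_moment s c (pCons 0 (kummer_poly k s c ^ 2)) = 0"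
    using gamma_moment_kummer_op[OF \<open>c \<noteq> 0\<close>, of s G] by simp
  moreover have k: "s + of_nat j \<noteq> 0" if "j < k" for j
  proof
    assume "s + of_nat j = 0"
    then have "s + of_nat k - 1 = of_nat (k - Suc j)"
      using that by (simp add: of_nat_diff algebra_simps)
    with s show False by simp
  qed
  ultimately show False
    using gamma_moment_z_kummer_poly_sq[OF \<open>c \<noteq> 0\<close>, of k s]
      gamma_moment_kummer_poly_sq_nonzero[OF \<open>c \<noteq> 0\<close>, of k s] assms(1,3) by auto
qed

section \<open>The energy derivative of H\<close>

definition eval_E :: "complex \<Rightarrow> complex poly poly \<Rightarrow> complex poly" where
  "eval_E e R = map_poly (\<lambda>c. poly c e) R"

lemma poly_eval_E: "poly (eval_E e R) z = bpoly R z e"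
  by (simp add: eval_E_def bpoly_def)

lemma pderiv_eval_E: "pderiv (eval_E e R) = eval_E e (pderiv R)"
  by (rule poly_eqI) (simp add: eval_E_def coeff_pderiv coeff_map_poly of_nat_poly)

lemma pderiv_map_poly_pderiv:
  "pderiv (map_poly pderiv R) = map_poly pderiv (pderiv (R :: complex poly poly))"
  by (rule poly_eqI) (simp add: coeff_pderiv coeff_map_poly of_nat_poly pderiv_smult)

lemma bpoly_eq_sum:
  assumes "degree R \<le> n"
  shows "bpoly R z E = (\<Sum>i\<le>n. poly (coeff R i) E * z ^ i)"
proof -
  have "degree (map_poly (\<lambda>c. poly c E) R) \<le> n"
    using assms map_poly_degree_leq by (metis order.trans)
  then have "map_poly (\<lambda>c. poly c E) R = (\<Sum>i\<le>n. monom (poly (coeff R i) E) i)"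
    by (metis (no_types, lifting) poly_as_sum_of_monoms' coeff_map_poly poly_0 sum.cong)
  then show ?thesis
    by (simp add: bpoly_def poly_sum poly_monom)
qed

lemma has_field_derivative_bpoly_E:
  assumes "D = bpoly (map_poly pderiv R) z e"
  shows "((\<lambda>E. bpoly R z E) has_field_derivative D) (at e within S)"
proof -
  have "degree (map_poly pderiv R) \<le> degree R"
    by (rule map_poly_degree_leq)
  then have "D = (\<Sum>i\<le>degree R. poly (pderiv (coeff R i)) e * z ^ i)"
    by (simp add: assms bpoly_eq_sum coeff_map_poly)
  then show ?thesis
    unfolding bpoly_eq_sum[OF order.refl] by (auto intro!: derivative_eq_intros)
qed

lemma deriv_bpoly_quotient:
  assumes "bpoly Q z E \<noteq> 0"
  shows "deriv (\<lambda>w. bpoly P w E / bpoly Q w E) z =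
    (bpoly (pderiv P) z E * bpoly Q z E - bpoly P z E * bpoly (pderiv Q) z E) / bpoly Q z E ^ 2"
proof (rule DERIV_imp_deriv)
  show "((\<lambda>w. bpoly P w E / bpoly Q w E) has_field_derivative
      (bpoly (pderiv P) z E * bpoly Q z E - bpoly P z E * bpoly (pderiv Q) z E) / bpoly Q z E ^ 2) (at z)"
    unfolding poly_eval_E[symmetric]
    by (rule DERIV_cong[OF DERIV_divide[OF poly_DERIV poly_DERIV]])
       (use assms in \<open>simp_all add: poly_eval_E pderiv_eval_E power2_eq_square\<close>)
qed

lemma eventually_bpoly_nonzero:
  assumes "bpoly Q z e \<noteq> 0"
  shows "eventually (\<lambda>E. bpoly Q z E \<noteq> 0) (nhds e)"
proof -
  have "isCont (\<lambda>E. bpoly Q z E) e"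
    by (rule DERIV_isCont[OF has_field_derivative_bpoly_E[OF refl]])
  then have "eventually (\<lambda>E. bpoly Q z E \<noteq> 0) (at e)"
    using assms by (simp add: isCont_def tendsto_imp_eventually_ne)
  then show ?thesis
    using assms by (auto simp: eventually_at_filter elim: eventually_mono)
qed

lemma bigo_square_imp_deriv_eq_0:
  fixes f :: "complex \<Rightarrow> complex"
  assumes f': "(f has_field_derivative f') (at x)"
    and bigo: "f \<in> O[at x](\<lambda>y. (y - x) ^ 2)"
  shows "f' = 0"
proof -
  obtain C where C: "eventually (\<lambda>y. norm (f y) \<le> C * norm ((y - x) ^ 2)) (at x)"
    using bigo by (elim landau_o.bigE) auto
  have lim: "((\<lambda>y. C * norm (y - x)) \<longlongrightarrow> 0) (at x)"
    using tendsto_mult_left[OF tendsto_norm_zero[OF LIM_zero[OF tendsto_ident_at]], of C x] by simp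
  have neq: "eventually (\<lambda>y. y \<noteq> x) (at x)"
    by (simp add: eventually_at_filter)
  have quot: "eventually (\<lambda>y. norm (f y / (y - x)) \<le> C * norm (y - x)) (at x)"
    using C neq by eventually_elim
      (auto simp: norm_divide norm_mult divide_le_eq power2_eq_square mult.assoc)
  have "((\<lambda>y. f y / (y - x)) \<longlongrightarrow> 0) (at x)"
    using quot lim by (rule Lim_null_comparison)
  then have "((\<lambda>y. f y / (y - x) * (y - x)) \<longlongrightarrow> 0 * (x - x)) (at x)"
    by (intro tendsto_intros)
  moreover have "eventually (\<lambda>y. f y / (y - x) * (y - x) = f y) (at x)"
    using neq by eventually_elim simp
  ultimately have "(f \<longlongrightarrow> 0) (at x)"
    by (simp add: filterlim_cong)
  moreover have "(f \<longlongrightarrow> f x) (at x)"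
    using DERIV_isCont[OF f'] by (simp add: isCont_def)
  ultimately have "f x = 0"
    using tendsto_unique[OF at_neq_bot] by blast
  then have "((\<lambda>y. (f y - f x) / (y - x)) \<longlongrightarrow> 0) (at x)"
    using \<open>((\<lambda>y. f y / (y - x)) \<longlongrightarrow> 0) (at x)\<close> by simp
  moreover have "((\<lambda>y. (f y - f x) / (y - x)) \<longlongrightarrow> f') (at x)"
    using f' by (simp add: has_field_derivative_iff)
  ultimately show "f' = 0"
    using tendsto_unique[OF at_neq_bot] by blast
qed

text \<open>The numerator of (\<partial>/\<partial>E) (P/Q) at E = e, over the denominator Q(z, e)^2.\<close>

definition dE_numerator :: "complex poly poly \<Rightarrow> complex poly poly \<Rightarrow> complex \<Rightarrow> complex poly" where
  "dE_numerator P Q e =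
     eval_E e (map_poly pderiv P) * eval_E e Q - eval_E e P * eval_E e (map_poly pderiv Q)"

text \<open>For m = p/q and U = W/q^2 this is q^4 (2 m U + 1 - U').\<close>

definition riccati_variation :: "complex poly \<Rightarrow> complex poly \<Rightarrow> complex poly \<Rightarrow> complex poly" where
  "riccati_variation p q W = smult 2 (p * q * W) + q ^ 4 - q ^ 2 * pderiv W + W * pderiv (q ^ 2)"

lemma Hfun_has_field_derivative_E:
  assumes "bpoly Q z e \<noteq> 0"
  shows "((\<lambda>E. Hfun \<nu> (\<lambda>w F. bpoly P w F / bpoly Q w F) z E) has_field_derivative
    4 * z ^ 2 * poly (riccati_variation (eval_E e P) (eval_E e Q) (dE_numerator P Q e)) z / bpoly Q z e ^ 4) (at e)"
proof -
  let ?m = "\<lambda>E. bpoly P z E / bpoly Q z E"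
  let ?n = "\<lambda>E. (bpoly (pderiv P) z E * bpoly Q z E - bpoly P z E * bpoly (pderiv Q) z E) / bpoly Q z E ^ 2"
  have ev: "eventually (\<lambda>E. Hfun \<nu> (\<lambda>w F. bpoly P w F / bpoly Q w F) z E =
      4 * ?m E ^ 2 * z ^ 2 + 4 * z ^ 2 * E - 4 * ?n E * z ^ 2 - 4 * \<nu> ^ 2 + 4 * z + 1) (nhds e)"
    using eventually_bpoly_nonzero[OF assms] by eventually_elim (simp add: Hfun_def deriv_bpoly_quotient)
  have "((\<lambda>E. 4 * ?m E ^ 2 * z ^ 2 + 4 * z ^ 2 * E - 4 * ?n E * z ^ 2 - 4 * \<nu> ^ 2 + 4 * z + 1)
      has_field_derivative
      4 * z ^ 2 * poly (riccati_variation (eval_E e P) (eval_E e Q) (dE_numerator P Q e)) z / bpoly Q z e ^ 4)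
      (at e)"
    by (rule derivative_eq_intros has_field_derivative_bpoly_E refl assms power_not_zero)+
       (use assms in \<open>simp add: riccati_variation_def dE_numerator_def pderiv_mult pderiv_diff
         pderiv_power pderiv_eval_E poly_eval_E pderiv_map_poly_pderiv; simp add: field_simps; algebra\<close>)
  then show ?thesis
    using DERIV_cong_ev[OF refl ev refl] by blast
qed

text \<open>The cleared form of p/q = -(s/(2z) - c/2 + L'/L), i.e. of M = -Y'/Y.\<close>

definition riccati_relation ::
    "complex \<Rightarrow> complex \<Rightarrow> complex poly \<Rightarrow> complex poly \<Rightarrow> complex poly \<Rightarrow> complex poly" where
  "riccati_relation s c L p q = 2 * [:0, 1:] * L * p + q * (2 * [:0, 1:] * pderiv L + [:s, - c:] * L)"

text \<open>For V = U L^2 with U = W/q^2: U' = 2 (p/q) U + 1 and 2 z ((p/q) L + L') = (c z - s) L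
  give z V' + (s - c z) V = z L^2.\<close>

lemma kummer_op_frac_riccati:
  "kummer_op_frac s c (W * L ^ 2) (q ^ 2) - [:0, 1:] * L ^ 2 * (q ^ 2) ^ 2 =
     L * (q * W * riccati_relation s c L p q - [:0, 1:] * L * riccati_variation p q W)"
proof -
  have two: "smult 2 x = 2 * x" for x :: "complex poly"
    by (simp add: numeral_poly)
  have square: "pderiv (x ^ 2) = 2 * x * pderiv x" for x :: "complex poly"
    by (simp add: power2_eq_square pderiv_mult mult_2 algebra_simps)
  show ?thesis
    unfolding kummer_op_frac_def kummer_op_def riccati_relation_def riccati_variation_def
      pderiv_mult square two
    by algebra
qed

lemma poly_eq_0_if_vanishes_at_Suc:
  fixes f :: "complex poly" and F :: "complex set"
  assumes "finite F" and "\<And>n. of_nat (Suc n) \<notin> F \<Longrightarrow> poly f (of_nat (Suc n)) = 0"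
  shows "f = 0"
proof (rule ccontr)
  assume "f \<noteq> 0"
  then have "finite (F \<union> {z. poly f z = 0})"
    using assms(1) poly_roots_finite by blast
  then have "finite ((\<lambda>n. of_nat (Suc n) :: complex) -` (F \<union> {z. poly f z = 0}))"
    by (rule finite_vimageI) (auto simp: inj_def)
  moreover have "(\<lambda>n. of_nat (Suc n) :: complex) -` (F \<union> {z. poly f z = 0}) = UNIV"
    using assms(2) by auto
  ultimately have "finite (UNIV :: nat set)"
    by (simp only:)
  then show False
    by simp
qed

lemma logderiv_powr_exp_poly:
  fixes w b z :: complex and L :: "complex poly"
  defines "Y \<equiv> \<lambda>x. x powr w * exp (b * x) * poly L x"
  assumes z: "z \<notin> \<real>\<^sub>\<le>\<^sub>0" and L: "poly L z \<noteq> 0"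
  shows "deriv Y z / Y z = w / z + b + poly (pderiv L) z / poly L z"
proof -
  have "z \<noteq> 0"
    using z by auto
  have "(Y has_field_derivative Y z * (w / z + b) + z powr w * exp (b * z) * poly (pderiv L) z) (at z)"
    unfolding Y_def
    by (rule derivative_eq_intros has_field_derivative_powr[OF z] refl | simp)+
       (use \<open>z \<noteq> 0\<close> in \<open>simp add: powr_diff field_simps\<close>)
  then show ?thesis
    using \<open>z \<noteq> 0\<close> L by (simp add: DERIV_imp_deriv Y_def field_simps)
qed

lemma riccati_relation_root:
  fixes s c z :: complex and L p q :: "complex poly"
  defines "Y \<equiv> \<lambda>w. w powr (s / 2) * exp (- c / 2 * w) * poly L w"
  assumes z: "z \<notin> \<real>\<^sub>\<le>\<^sub>0" and L: "poly L z \<noteq> 0" and q: "poly q z \<noteq> 0"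
    and M: "poly p z / poly q z = - deriv Y z / Y z"
  shows "poly (riccati_relation s c L p q) z = 0"
proof -
  have "z \<noteq> 0"
    using z by auto
  have "poly p z / poly q z = - (s / 2 / z - c / 2 + poly (pderiv L) z / poly L z)"
    using M logderiv_powr_exp_poly[OF z L, of "s / 2" "- c / 2"] by (simp add: Y_def)
  then show ?thesis
    using \<open>z \<noteq> 0\<close> L q by (simp add: riccati_relation_def field_simps)
qed

lemma riccati_variation_root:
  assumes "bpoly Q z e \<noteq> 0" and "z \<noteq> 0"
    and "(\<lambda>E. Hfun \<nu> (\<lambda>w F. bpoly P w F / bpoly Q w F) z E) \<in> O[at e](\<lambda>E. (E - e) ^ 2)"
  shows "poly (riccati_variation (eval_E e P) (eval_E e Q) (dE_numerator P Q e)) z = 0"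
  using bigo_square_imp_deriv_eq_0[OF Hfun_has_field_derivative_E[OF assms(1)] assms(3)] assms(1,2)
  by simp

lemma Yfun_eq_kummer_poly:
  assumes "s = 2 * \<epsilon> * \<nu> + 1" and "c = 2 / (2 * \<epsilon> * \<nu> + 2 * of_nat k + 1)"
  shows "Yfun \<nu> k \<epsilon> = (\<lambda>z. z powr (s / 2) * exp (- c / 2 * z) * poly (kummer_poly k s c) z)"
proof -
  define a where "a = 2 * \<epsilon> * \<nu> + 2 * of_nat k + 1"
  have exponent: "\<epsilon> * \<nu> + 1 / 2 = s / 2"
    by (simp add: assms(1) field_simps)
  have "- c / 2 * z = - z / a" and "c * z = 2 * z / a" for z
    unfolding assms(2) a_def[symmetric] by simp_all
  then show ?thesis
    unfolding Yfun_def poly_kummer_poly a_def[symmetric] assms(1)[symmetric] exponent by simp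
qed

theorem mainTheorem14:
  fixes \<nu> \<epsilon> :: complex and k :: nat
  assumes "\<epsilon> \<in> {1, -1}"
    and "2 * \<epsilon> * \<nu> + 2 * of_nat k + 1 \<noteq> 0"
    and "\<exists>P Q :: complex poly poly.
           (\<exists>z. bpoly Q z (E0 \<nu> k \<epsilon>) \<noteq> 0) \<and>
           (\<forall>z. z \<notin> \<real>\<^sub>\<le>\<^sub>0 \<and> Yfun \<nu> k \<epsilon> z \<noteq> 0 \<and> bpoly Q z (E0 \<nu> k \<epsilon>) \<noteq> 0 \<longrightarrow>
                bpoly P z (E0 \<nu> k \<epsilon>) / bpoly Q z (E0 \<nu> k \<epsilon>)
                  = - deriv (Yfun \<nu> k \<epsilon>) z / Yfun \<nu> k \<epsilon> z) \<and>
           (\<forall>z. bpoly Q z (E0 \<nu> k \<epsilon>) \<noteq> 0 \<longrightarrow>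
                (\<lambda>E. Hfun \<nu> (\<lambda>w F. bpoly P w F / bpoly Q w F) z E)
                  \<in> O[at (E0 \<nu> k \<epsilon>)](\<lambda>E. (E - E0 \<nu> k \<epsilon>) ^ 2))"
  shows "2 * \<epsilon> * \<nu> + of_nat k \<in> \<nat>"
proof (rule ccontr)
  assume not_nat: "2 * \<epsilon> * \<nu> + of_nat k \<notin> \<nat>"
  define e s c where "e = E0 \<nu> k \<epsilon>" and "s = 2 * \<epsilon> * \<nu> + 1"
    and "c = 2 / (2 * \<epsilon> * \<nu> + 2 * of_nat k + 1)"
  obtain P Q :: "complex poly poly" where Q: "\<exists>z. bpoly Q z e \<noteq> 0"
    and M: "\<And>z. z \<notin> \<real>\<^sub>\<le>\<^sub>0 \<Longrightarrow> Yfun \<nu> k \<epsilon> z \<noteq> 0 \<Longrightarrow> bpoly Q z e \<noteq> 0 \<Longrightarrow>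
      bpoly P z e / bpoly Q z e = - deriv (Yfun \<nu> k \<epsilon>) z / Yfun \<nu> k \<epsilon> z"
    and H: "\<And>z. bpoly Q z e \<noteq> 0 \<Longrightarrow>
      (\<lambda>E. Hfun \<nu> (\<lambda>w F. bpoly P w F / bpoly Q w F) z E) \<in> O[at e](\<lambda>E. (E - e) ^ 2)"
    using assms(3) unfolding e_def by blast
  define L p q W where "L = kummer_poly k s c" and "p = eval_E e P" and "q = eval_E e Q"
    and "W = dE_numerator P Q e"
  have Y: "Yfun \<nu> k \<epsilon> = (\<lambda>z. z powr (s / 2) * exp (- c / 2 * z) * poly L z)"
    unfolding L_def by (rule Yfun_eq_kummer_poly) (simp_all add: s_def c_def)
  have "q \<noteq> 0"
    using Q unfolding q_def by (metis poly_0 poly_eval_E)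
  have "poly (riccati_relation s c L p q) z = 0 \<and> poly (riccati_variation p q W) z = 0"
    if "z = of_nat (Suc n)" and "poly L z \<noteq> 0" and "poly q z \<noteq> 0" for z n
  proof -
    have "z \<notin> \<real>\<^sub>\<le>\<^sub>0" and "z \<noteq> 0"
      using that(1) by (auto simp: complex_nonpos_Reals_iff simp del: of_nat_Suc)
    moreover from this have "Yfun \<nu> k \<epsilon> z \<noteq> 0"
      using that(2) by (simp add: Y)
    ultimately show ?thesis
      using M[of z] H[of z] that(2,3)
      by (auto simp: p_def q_def W_def poly_eval_E Y intro!: riccati_relation_root riccati_variation_root)
  qed
  then have "riccati_relation s c L p q = 0" and "riccati_variation p q W = 0"
    using poly_eq_0_if_vanishes_at_Suc[of "{z. poly L z = 0} \<union> {z. poly q z = 0}"]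
      poly_roots_finite[OF kummer_poly_nonzero] poly_roots_finite[OF \<open>q \<noteq> 0\<close>] by (auto simp: L_def)
  then have "kummer_op_frac s c (W * L ^ 2) (q ^ 2) = [:0, 1:] * L ^ 2 * (q ^ 2) ^ 2"
    using kummer_op_frac_riccati[of s c W L q p] by simp
  moreover have "kummer_op_frac s c (W * L ^ 2) (q ^ 2) \<noteq> [:0, 1:] * L ^ 2 * (q ^ 2) ^ 2"
    unfolding L_def using assms(2) not_nat \<open>q \<noteq> 0\<close>
    by (intro kummer_op_frac_ne_z_kummer_poly_sq) (auto simp: s_def c_def algebra_simps)
  ultimately show False
    by contradiction
qed

end
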